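(* For a ring $R$, the following are equivalent: (1) $R$ is a DT ring; (2) $R$ is a semi-tripotent ring; (3) for every $a\in R$ there exist an idempotent $e\in R$ and $j\in J(R)$ such that $a^2=e+j$.
   Context: All rings are associative with identity. $J(R)$ is the Jacobson radical, $U(R)$ the group of units. $\Delta(R)=\{x\in R: x+u\in U(R)\text{ for all }u\in U(R)\}$. $\mathrm{Tr}(R)=\{x\in R: x^3=x\}$. A ring $R$ is a DT ring if every $r\in R$ can be written $r=e+d$ with $e\in\mathrm{Tr}(R)$ and $d\in\Delta(R)$. A ring $R$ is semi-tripotent if every $r\in R$ can be written $r=e+j$ with $e\in\mathrm{Tr}(R)$ and $j\in J(R)$. *)

theory Defs
  imports Main
begin

definition units_of_ring :: "'a::ring_1 set" where
  "units_of_ring = {u. \<exists>v. u * v = 1 \<and> v * u = 1}"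

definition left_ideal :: "'a::ring_1 set \<Rightarrow> bool" where
  "left_ideal I \<longleftrightarrow> 0 \<in> I \<and> (\<forall>x\<in>I. \<forall>y\<in>I. x + y \<in> I) \<and> (\<forall>x\<in>I. - x \<in> I)
     \<and> (\<forall>r. \<forall>x\<in>I. r * x \<in> I)"

definition maximal_left_ideal :: "'a::ring_1 set \<Rightarrow> bool" where
  "maximal_left_ideal I \<longleftrightarrow> left_ideal I \<and> I \<noteq> UNIV
     \<and> (\<forall>K. left_ideal K \<and> I \<subseteq> K \<longrightarrow> K = I \<or> K = UNIV)"

definition jacobson :: "'a::ring_1 set" where
  "jacobson = \<Inter> {I. maximal_left_ideal I}"

definition Delta :: "'a::ring_1 set" where
  "Delta = {x. \<forall>u\<in>units_of_ring. x + u \<in> units_of_ring}"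

definition tripotents :: "'a::ring_1 set" where
  "tripotents = {x. x ^ 3 = x}"

definition DT_ring :: "'a::ring_1 itself \<Rightarrow> bool" where
  "DT_ring _ \<longleftrightarrow> (\<forall>r::'a. \<exists>e d. e \<in> tripotents \<and> d \<in> Delta \<and> r = e + d)"

definition semi_tripotent :: "'a::ring_1 itself \<Rightarrow> bool" where
  "semi_tripotent _ \<longleftrightarrow> (\<forall>r::'a. \<exists>e j. e \<in> tripotents \<and> j \<in> jacobson \<and> r = e + j)"

end

theory Submission
  imports Defs
begin

text \<open>
  Always \<open>J(R) \<subseteq> \<Delta>(R)\<close>. Conversely, \<open>\<Delta>(R)\<close> is stable under multiplication by units and by
  idempotents (the latter because \<open>1 + f d f\<close> is a unit for idempotent \<open>f\<close> and \<open>d \<in> \<Delta>(R)\<close>).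
  In a DT ring every \<open>r\<close> is \<open>t + e\<close> with \<open>t\<close> tripotent and \<open>e \<in> \<Delta>(R)\<close>, and
  \<open>t = (t\<^sup>2 + t - 1) + (1 - t\<^sup>2)\<close> is an involutive unit plus an idempotent; hence
  \<open>r \<Delta>(R) \<subseteq> \<Delta>(R)\<close>, so \<open>1 + r d\<close> is a unit for \<open>d \<in> \<Delta>(R)\<close> and \<open>\<Delta>(R) = J(R)\<close>.

  If every square is an idempotent modulo \<open>J(R)\<close>, then \<open>R/J(R)\<close> satisfies \<open>x\<^sup>4 = x\<^sup>2\<close>. It is
  reduced: for \<open>y\<^sup>2 = 0\<close> a nonzero idempotent \<open>(r y)\<^sup>2\<close> would yield \<open>2 \<times> 2\<close> matrix units,
  which violate \<open>x\<^sup>4 = x\<^sup>2\<close>; so \<open>y \<in> J\<close>. Therefore \<open>R/J(R)\<close> satisfies \<open>x\<^sup>3 = x\<close> and every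
  element is \<open>f - 2 g\<close> for idempotents \<open>g \<le> f\<close>. Idempotents of \<open>R/J(R)\<close> are squares and thus
  lift, \<open>g\<close> can be lifted below the lift of \<open>f\<close>, and \<open>f - 2 g\<close> lifts to a tripotent.
\<close>

section \<open>Units\<close>

lemma units_of_ringI:
  fixes x :: "'a::ring_1"
  assumes "x * y = 1" and "z * x = 1"
  shows "x \<in> units_of_ring"
proof -
  have "z = z * (x * y)" using assms(1) by simp
  also have "\<dots> = y" using assms(2) by (simp flip: mult.assoc)
  finally show ?thesis using assms unfolding units_of_ring_def by blast
qed

lemma units_of_ringE:
  assumes "u \<in> units_of_ring"
  obtains v where "u * v = 1" and "v * u = 1"
  using assms unfolding units_of_ring_def by blast

lemma one_in_units_of_ring: "1 \<in> units_of_ring"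
  unfolding units_of_ring_def by auto

lemma units_of_ring_inverse:
  fixes u :: "'a::ring_1"
  assumes "u * v = 1" and "v * u = 1"
  shows "v \<in> units_of_ring"
  using assms unfolding units_of_ring_def by blast

lemma units_of_ring_mult:
  fixes u v :: "'a::ring_1"
  assumes "u \<in> units_of_ring" and "v \<in> units_of_ring"
  shows "u * v \<in> units_of_ring"
proof -
  obtain u' where u: "u * u' = 1" "u' * u = 1" using assms(1) by (rule units_of_ringE)
  obtain v' where v: "v * v' = 1" "v' * v = 1" using assms(2) by (rule units_of_ringE)
  have "u * v * (v' * u') = u * (v * v') * u'" and "v' * u' * (u * v) = v' * (u' * u) * v"
    by (simp_all add: mult.assoc)
  with u v show ?thesis by (intro units_of_ringI) simp_all
qed

lemma units_of_ring_uminus: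
  fixes u :: "'a::ring_1"
  assumes "u \<in> units_of_ring"
  shows "- u \<in> units_of_ring"
proof -
  obtain v where "u * v = 1" "v * u = 1" using assms by (rule units_of_ringE)
  then have "(- u) * (- v) = 1" "(- v) * (- u) = 1" by simp_all
  then show ?thesis by (rule units_of_ringI)
qed

lemma one_plus_mult_swap_unit:
  fixes a b :: "'a::ring_1"
  assumes "1 + a * b \<in> units_of_ring"
  shows "1 + b * a \<in> units_of_ring"
proof -
  obtain w where w: "(1 + a * b) * w = 1" "w * (1 + a * b) = 1"
    using assms by (rule units_of_ringE)
  have "(1 + b * a) * (1 - b * w * a) = 1 + b * a - b * ((1 + a * b) * w) * a"
    and "(1 - b * w * a) * (1 + b * a) = 1 + b * a - b * (w * (1 + a * b)) * a"
    by (simp_all add: algebra_simps)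
  with w show ?thesis by (intro units_of_ringI) simp_all
qed

lemma one_plus_unit_if_one_minus_square_unit:
  fixes z :: "'a::ring_1"
  assumes "1 - z * z \<in> units_of_ring"
  shows "1 + z \<in> units_of_ring"
proof -
  obtain w where w: "(1 - z * z) * w = 1" "w * (1 - z * z) = 1"
    using assms by (rule units_of_ringE)
  have "(1 + z) * (1 - z) = 1 - z * z" and "(1 - z) * (1 + z) = 1 - z * z"
    by (simp_all add: algebra_simps)
  with w have "(1 + z) * ((1 - z) * w) = 1" and "(w * (1 - z)) * (1 + z) = 1"
    by (metis mult.assoc)+
  then show ?thesis by (rule units_of_ringI)
qed

lemma units_of_ring_if_mult_units:
  fixes x y :: "'a::ring_1"
  assumes "x * y \<in> units_of_ring" and "y * x \<in> units_of_ring"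
  shows "x \<in> units_of_ring"
proof -
  obtain p where "x * y * p = 1" using assms(1) by (rule units_of_ringE)
  moreover obtain q where "q * (y * x) = 1" using assms(2) by (rule units_of_ringE)
  ultimately have "x * (y * p) = 1" and "(q * y) * x = 1" by (simp_all add: mult.assoc)
  then show ?thesis by (rule units_of_ringI)
qed

section \<open>The set \<open>\<Delta>(R)\<close>\<close>

lemma Delta_add:
  fixes d e :: "'a::ring_1"
  assumes "d \<in> Delta" and "e \<in> Delta"
  shows "d + e \<in> Delta"
  using assms unfolding Delta_def by (auto simp: add.assoc)

lemma Delta_uminus:
  fixes d :: "'a::ring_1"
  assumes "d \<in> Delta"
  shows "- d \<in> Delta"
  unfolding Delta_def
proof clarify
  fix u :: 'a
  assume "u \<in> units_of_ring"
  then have "d + - u \<in> units_of_ring"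
    using assms units_of_ring_uminus unfolding Delta_def by blast
  from units_of_ring_uminus [OF this] show "- d + u \<in> units_of_ring" by simp
qed

lemma Delta_diff:
  fixes d e :: "'a::ring_1"
  assumes "d \<in> Delta" and "e \<in> Delta"
  shows "d - e \<in> Delta"
  using Delta_add [OF assms(1) Delta_uminus [OF assms(2)]] by simp

lemma one_plus_Delta_unit:
  fixes d :: "'a::ring_1"
  assumes "d \<in> Delta"
  shows "1 + d \<in> units_of_ring"
  using assms one_in_units_of_ring unfolding Delta_def by (auto simp: add.commute)

lemma Delta_mult_unit_left:
  fixes d u :: "'a::ring_1"
  assumes "u \<in> units_of_ring" and "d \<in> Delta"
  shows "u * d \<in> Delta"
  unfolding Delta_def
proof clarify
  fix w :: 'a
  assume w: "w \<in> units_of_ring"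
  obtain v where v: "u * v = 1" "v * u = 1" using assms(1) by (rule units_of_ringE)
  have "v * w \<in> units_of_ring"
    using units_of_ring_inverse [OF v] w by (rule units_of_ring_mult)
  then have "d + v * w \<in> units_of_ring" using assms(2) unfolding Delta_def by blast
  with assms(1) have "u * (d + v * w) \<in> units_of_ring" by (rule units_of_ring_mult)
  moreover have "u * (d + v * w) = u * d + w"
    using v by (simp add: distrib_left flip: mult.assoc)
  ultimately show "u * d + w \<in> units_of_ring" by simp
qed

lemma Delta_mult_unit_right:
  fixes d u :: "'a::ring_1"
  assumes "u \<in> units_of_ring" and "d \<in> Delta"
  shows "d * u \<in> Delta"
  unfolding Delta_def
proof clarify
  fix w :: 'a
  assume w: "w \<in> units_of_ring"
  obtain v where v: "u * v = 1" "v * u = 1" using assms(1) by (rule units_of_ringE)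
  have "w * v \<in> units_of_ring"
    using w units_of_ring_inverse [OF v] by (rule units_of_ring_mult)
  then have "d + w * v \<in> units_of_ring" using assms(2) unfolding Delta_def by blast
  then have "(d + w * v) * u \<in> units_of_ring" using assms(1) by (rule units_of_ring_mult)
  moreover have "(d + w * v) * u = d * u + w"
    using v by (simp add: distrib_right mult.assoc)
  ultimately show "d * u + w \<in> units_of_ring" by simp
qed

lemma Delta_mult_square_zero:
  fixes d n :: "'a::ring_1"
  assumes "d \<in> Delta" and "n * n = 0"
  shows "d * n \<in> Delta"
proof -
  have "(1 + n) * (1 - n) = 1" and "(1 - n) * (1 + n) = 1"
    using assms(2) by (simp_all add: algebra_simps)
  then have "1 + n \<in> units_of_ring" by (rule units_of_ringI)
  then have "d * (1 + n) - d \<in> Delta"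
    using assms(1) by (intro Delta_diff Delta_mult_unit_right)
  then show ?thesis by (simp add: algebra_simps)
qed

text \<open>If \<open>(1 + d) (1 + d') = 1\<close>, the product of the corner perturbations \<open>1 + f d f\<close> and
  \<open>1 + f d' f\<close> differs from \<open>1\<close> only by \<open>f d (1 - f) \<cdot> d' f\<close>, whose first factor squares
  to zero.\<close>

lemma corner_perturbations_product_unit:
  fixes f d d' :: "'a::ring_1"
  assumes f: "f * f = f" and d': "d' \<in> Delta" and inv: "(1 + d) * (1 + d') = 1"
  shows "(1 + f * d * f) * (1 + f * d' * f) \<in> units_of_ring"
proof -
  define n where "n = f * d * (1 - f)"
  have sum: "d + d' = - (d * d')"
    using inv by (simp add: algebra_simps eq_neg_iff_add_eq_0)
  have "(1 + f * d * f) * (1 + f * d' * f) = 1 + f * (d + d') * f + f * d * (f * f) * d' * f"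
    by (simp add: algebra_simps)
  also have "\<dots> = 1 - n * (d' * f)"
    unfolding sum n_def using f by (simp add: algebra_simps mult.assoc)
  finally have prod: "(1 + f * d * f) * (1 + f * d' * f) = 1 + (- n) * (d' * f)" by simp
  have "n * n = f * d * ((1 - f) * f) * d * (1 - f)"
    unfolding n_def by (simp only: mult.assoc)
  then have "n * n = 0" using f by (simp add: algebra_simps)
  then have "- (d' * n) \<in> Delta" using d' by (intro Delta_uminus Delta_mult_square_zero)
  moreover have "(d' * f) * (- n) = - (d' * n)"
    unfolding n_def by (metis f mult.assoc mult_minus_right)
  ultimately have "1 + (d' * f) * (- n) \<in> units_of_ring"
    using one_plus_Delta_unit by metis
  then show ?thesis unfolding prod by (rule one_plus_mult_swap_unit)
qed

lemma one_plus_corner_Delta_unit: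
  fixes f d :: "'a::ring_1"
  assumes f: "f * f = f" and d: "d \<in> Delta"
  shows "1 + f * d * f \<in> units_of_ring"
proof -
  obtain v where v: "(1 + d) * v = 1" "v * (1 + d) = 1"
    using one_plus_Delta_unit [OF d] by (rule units_of_ringE)
  define d' where "d' = v - 1"
  have "d' = - (v * d)"
    using v(2) unfolding d'_def by (simp add: algebra_simps eq_diff_eq)
  then have d': "d' \<in> Delta"
    using Delta_uminus Delta_mult_unit_left [OF units_of_ring_inverse [OF v] d] by simp
  have "(1 + d) * (1 + d') = 1" and "(1 + d') * (1 + d) = 1"
    using v unfolding d'_def by simp_all
  then show ?thesis
    using corner_perturbations_product_unit [OF f] d d' by (blast intro: units_of_ring_if_mult_units)
qed

lemma idempotent_mult_Delta:
  fixes f d :: "'a::ring_1"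
  assumes f: "f * f = f" and d: "d \<in> Delta"
  shows "f * d \<in> Delta"
  unfolding Delta_def
proof clarify
  fix w :: 'a
  assume w: "w \<in> units_of_ring"
  obtain v where v: "w * v = 1" "v * w = 1" using w by (rule units_of_ringE)
  have "1 + (f * (d * v)) * f \<in> units_of_ring"
    using one_plus_corner_Delta_unit [OF f Delta_mult_unit_right [OF units_of_ring_inverse [OF v] d]]
    by (simp add: mult.assoc)
  then have "1 + f * (f * (d * v)) \<in> units_of_ring" by (rule one_plus_mult_swap_unit)
  then have "1 + (f * d) * v \<in> units_of_ring" using f by (simp flip: mult.assoc)
  then have "1 + v * (f * d) \<in> units_of_ring" by (rule one_plus_mult_swap_unit)
  with w have "w * (1 + v * (f * d)) \<in> units_of_ring" by (rule units_of_ring_mult)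
  moreover have "w * (1 + v * (f * d)) = f * d + w"
    using v by (simp add: distrib_left add.commute flip: mult.assoc)
  ultimately show "f * d + w \<in> units_of_ring" by simp
qed

section \<open>The Jacobson radical\<close>

lemma left_ideal_UNIV_if_one:
  assumes "left_ideal I" and "(1::'a::ring_1) \<in> I"
  shows "I = UNIV"
  using assms unfolding left_ideal_def by (metis UNIV_eq_I mult.right_neutral)

lemma left_ideal_sum_principal:
  fixes x :: "'a::ring_1"
  assumes M: "left_ideal M"
  shows "left_ideal {m + r * x | m r. m \<in> M}" (is "left_ideal ?K")
  unfolding left_ideal_def
proof (intro conjI ballI allI)
  have "0 = 0 + 0 * x" and "0 \<in> M" using M by (simp_all add: left_ideal_def)
  then show "0 \<in> ?K" by blast
next
  fix y z
  assume "y \<in> ?K" and "z \<in> ?K"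
  then obtain m r m' r' where m: "m \<in> M" "m' \<in> M" and "y = m + r * x" "z = m' + r' * x"
    by blast
  then have "y + z = (m + m') + (r + r') * x" by (simp add: algebra_simps)
  moreover have "m + m' \<in> M" using M m by (simp add: left_ideal_def)
  ultimately show "y + z \<in> ?K" by blast
next
  fix y
  assume "y \<in> ?K"
  then obtain m r where "m \<in> M" and "y = m + r * x" by blast
  then have "- y = - m + (- r) * x" and "- m \<in> M" using M by (simp_all add: left_ideal_def)
  then show "- y \<in> ?K" by blast
next
  fix s y
  assume "y \<in> ?K"
  then obtain m r where "m \<in> M" and "y = m + r * x" by blast
  then have "s * y = s * m + (s * r) * x" and "s * m \<in> M"
    using M by (simp_all add: left_ideal_def algebra_simps)
  then show "s * y \<in> ?K" by blast
qed

lemma left_ideal_principal: "left_ideal {s * (x::'a::ring_1) | s. True}"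
proof -
  have "left_ideal {0::'a}" by (simp add: left_ideal_def)
  then have "left_ideal {m + s * x | m s. m \<in> {0}}" by (rule left_ideal_sum_principal)
  then show ?thesis by simp
qed

lemma left_ideal_Union_chain:
  assumes "C \<noteq> {}" and ideals: "\<And>I. I \<in> C \<Longrightarrow> left_ideal (I :: 'a::ring_1 set)"
    and chain: "\<forall>I\<in>C. \<forall>K\<in>C. I \<subseteq> K \<or> K \<subseteq> I"
  shows "left_ideal (\<Union>C)"
  unfolding left_ideal_def
proof (intro conjI ballI allI)
  obtain I where "I \<in> C" using assms(1) by blast
  with ideals show "0 \<in> \<Union>C" unfolding left_ideal_def by blast
next
  fix x y
  assume "x \<in> \<Union>C" and "y \<in> \<Union>C"
  then obtain I K where IK: "I \<in> C" "K \<in> C" "x \<in> I" "y \<in> K" by blast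
  with chain have "I \<union> K \<in> C" by (metis sup.absorb1 sup.absorb2)
  moreover from IK have "x \<in> I \<union> K" and "y \<in> I \<union> K" by simp_all
  ultimately have "x + y \<in> I \<union> K" using ideals unfolding left_ideal_def by blast
  with \<open>I \<union> K \<in> C\<close> show "x + y \<in> \<Union>C" by blast
next
  fix x
  assume "x \<in> \<Union>C"
  then obtain I where "I \<in> C" and "x \<in> I" by blast
  with ideals show "- x \<in> \<Union>C" unfolding left_ideal_def by blast
next
  fix s x
  assume "x \<in> \<Union>C"
  then obtain I where "I \<in> C" and "x \<in> I" by blast
  with ideals show "s * x \<in> \<Union>C" unfolding left_ideal_def by blast
qed

lemma exists_maximal_left_ideal_superset:
  fixes L :: "'a::ring_1 set"
  assumes "left_ideal L" and "1 \<notin> L"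
  obtains M where "maximal_left_ideal M" and "L \<subseteq> M"
proof -
  define A where "A = {K. left_ideal K \<and> L \<subseteq> K \<and> (1::'a) \<notin> K}"
  have "\<exists>M\<in>A. \<forall>K\<in>A. M \<subseteq> K \<longrightarrow> K = M"
  proof (rule subset_Zorn_nonempty)
    show "A \<noteq> {}" using assms unfolding A_def by blast
  next
    fix C
    assume "C \<noteq> {}" and "subset.chain A C"
    then have "C \<subseteq> A" and chain: "\<forall>I\<in>C. \<forall>K\<in>C. I \<subseteq> K \<or> K \<subseteq> I"
      unfolding subset_chain_def by blast+
    then have "\<And>I. I \<in> C \<Longrightarrow> left_ideal I" unfolding A_def by blast
    with \<open>C \<noteq> {}\<close> have "left_ideal (\<Union>C)" using chain by (rule left_ideal_Union_chain)
    moreover have "L \<subseteq> \<Union>C" and "1 \<notin> \<Union>C"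
      using \<open>C \<noteq> {}\<close> \<open>C \<subseteq> A\<close> unfolding A_def by blast+
    ultimately show "\<Union>C \<in> A" unfolding A_def by blast
  qed
  then obtain M where M: "M \<in> A" and max: "\<forall>K\<in>A. M \<subseteq> K \<longrightarrow> K = M" by blast
  have "maximal_left_ideal M"
    unfolding maximal_left_ideal_def
  proof (intro conjI allI impI)
    show "left_ideal M" and "M \<noteq> UNIV" using M unfolding A_def by auto
  next
    fix K
    assume K: "left_ideal K \<and> M \<subseteq> K"
    show "K = M \<or> K = UNIV"
    proof (cases "1 \<in> K")
      case True
      with K show ?thesis using left_ideal_UNIV_if_one by blast
    next
      case False
      with K M max show ?thesis unfolding A_def by blast
    qed
  qed
  moreover have "L \<subseteq> M" using M unfolding A_def by blast
  ultimately show thesis by (rule that)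
qed

lemma maximal_left_ideal_one_notin:
  assumes "maximal_left_ideal (M :: 'a::ring_1 set)"
  shows "1 \<notin> M"
  using assms left_ideal_UNIV_if_one unfolding maximal_left_ideal_def by blast

lemma jacobson_zero: "(0::'a::ring_1) \<in> jacobson"
  by (auto simp: jacobson_def maximal_left_ideal_def left_ideal_def)

lemma jacobson_add:
  fixes x y :: "'a::ring_1"
  assumes "x \<in> jacobson" and "y \<in> jacobson"
  shows "x + y \<in> jacobson"
  using assms by (auto simp: jacobson_def maximal_left_ideal_def left_ideal_def)

lemma jacobson_uminus:
  fixes x :: "'a::ring_1"
  assumes "x \<in> jacobson"
  shows "- x \<in> jacobson"
  using assms by (auto simp: jacobson_def maximal_left_ideal_def left_ideal_def)

lemma jacobson_diff:
  fixes x y :: "'a::ring_1"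
  assumes "x \<in> jacobson" and "y \<in> jacobson"
  shows "x - y \<in> jacobson"
  using jacobson_add [OF assms(1) jacobson_uminus [OF assms(2)]] by simp

lemma jacobson_mult_left:
  fixes x :: "'a::ring_1"
  assumes "x \<in> jacobson"
  shows "r * x \<in> jacobson"
  using assms by (auto simp: jacobson_def maximal_left_ideal_def left_ideal_def)

lemma jacobson_left_invertible:
  fixes x :: "'a::ring_1"
  assumes "x \<in> jacobson"
  obtains s where "s * (1 + r * x) = 1"
proof -
  let ?L = "{s * (1 + r * x) | s. True}"
  have "1 \<in> ?L"
  proof (rule ccontr)
    assume "1 \<notin> ?L"
    with left_ideal_principal obtain M where M: "maximal_left_ideal M" and "?L \<subseteq> M"
      by (rule exists_maximal_left_ideal_superset)
    then have M_ideal: "left_ideal M" by (simp add: maximal_left_ideal_def)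
    have "1 * (1 + r * x) \<in> ?L" by blast
    with \<open>?L \<subseteq> M\<close> have "1 + r * x \<in> M" by auto
    moreover have "x \<in> M" using M assms by (simp add: jacobson_def)
    then have "- (r * x) \<in> M" using M_ideal unfolding left_ideal_def by blast
    ultimately have "(1 + r * x) + - (r * x) \<in> M" using M_ideal unfolding left_ideal_def by blast
    then show False using maximal_left_ideal_one_notin [OF M] by simp
  qed
  then obtain s where "s * (1 + r * x) = 1" by auto
  then show thesis by (rule that)
qed

lemma jacobson_one_plus_unit:
  fixes x :: "'a::ring_1"
  assumes "x \<in> jacobson"
  shows "1 + r * x \<in> units_of_ring"
proof -
  obtain s where s: "s * (1 + r * x) = 1" using assms by (rule jacobson_left_invertible)
  have "s = 1 + (- (s * r)) * x" using s by (simp add: algebra_simps)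
  moreover obtain s' where "s' * (1 + (- (s * r)) * x) = 1"
    using assms by (rule jacobson_left_invertible)
  ultimately have s': "s' * s = 1" by simp
  have "s' = s' * (s * (1 + r * x))" using s by simp
  also have "\<dots> = 1 + r * x" using s' by (simp flip: mult.assoc)
  finally have "(1 + r * x) * s = 1" using s' by simp
  with s show ?thesis by (rule units_of_ring_inverse)
qed

lemma jacobson_if_one_plus_units:
  fixes x :: "'a::ring_1"
  assumes units: "\<And>r. 1 + r * x \<in> units_of_ring"
  shows "x \<in> jacobson"
  unfolding jacobson_def
proof (clarify, rule ccontr)
  fix M :: "'a set"
  assume M: "maximal_left_ideal M" and "x \<notin> M"
  then have M_ideal: "left_ideal M" by (simp add: maximal_left_ideal_def)
  define K where "K = {m + r * x | m r. m \<in> M}"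
  have "left_ideal K" unfolding K_def using M_ideal by (rule left_ideal_sum_principal)
  moreover have "M \<subseteq> K"
  proof
    fix m assume "m \<in> M"
    moreover have "m = m + 0 * x" by simp
    ultimately show "m \<in> K" unfolding K_def by blast
  qed
  moreover have "x \<in> K"
  proof -
    have "x = 0 + 1 * x" by simp
    with M_ideal show ?thesis unfolding K_def left_ideal_def by blast
  qed
  ultimately have "K = M \<or> K = UNIV" using M unfolding maximal_left_ideal_def by blast
  with \<open>x \<in> K\<close> \<open>x \<notin> M\<close> have "K = UNIV" by auto
  then obtain m r where "1 = m + r * x" and "m \<in> M" unfolding K_def by blast
  then have "m = 1 + (- r) * x" and "m \<in> M" by (simp_all add: algebra_simps)
  then obtain v where "v * m = 1" and "m \<in> M" using units by (metis units_of_ringE)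
  moreover have "v * m \<in> M" using M_ideal \<open>m \<in> M\<close> unfolding left_ideal_def by blast
  ultimately show False using maximal_left_ideal_one_notin [OF M] by simp
qed

lemma jacobson_mult_right:
  fixes x :: "'a::ring_1"
  assumes "x \<in> jacobson"
  shows "x * s \<in> jacobson"
proof (rule jacobson_if_one_plus_units)
  fix r
  have "1 + s * (r * x) \<in> units_of_ring"
    using jacobson_one_plus_unit [OF assms, of "s * r"] by (simp add: mult.assoc)
  then have "1 + (r * x) * s \<in> units_of_ring" by (rule one_plus_mult_swap_unit)
  then show "1 + r * (x * s) \<in> units_of_ring" by (simp add: mult.assoc)
qed

lemma one_notin_jacobson: "(1::'a::ring_1) \<notin> jacobson"
proof
  assume "(1::'a) \<in> jacobson"
  then have "1 + (- 1) * (1::'a) \<in> units_of_ring" by (rule jacobson_one_plus_unit)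
  then show False by (simp add: units_of_ring_def)
qed

lemma jacobson_subset_Delta: "jacobson \<subseteq> (Delta :: 'a::ring_1 set)"
  unfolding Delta_def
proof clarify
  fix x w :: 'a
  assume x: "x \<in> jacobson" and w: "w \<in> units_of_ring"
  obtain v where v: "w * v = 1" "v * w = 1" using w by (rule units_of_ringE)
  have "w * (1 + v * x) \<in> units_of_ring"
    using w jacobson_one_plus_unit [OF x] by (rule units_of_ring_mult)
  moreover have "w * (1 + v * x) = x + w"
    using v by (simp add: distrib_left add.commute flip: mult.assoc)
  ultimately show "x + w \<in> units_of_ring" by simp
qed

lemma jacobson_if_left_multiples_squares_jacobson:
  fixes y :: "'a::ring_1"
  assumes "\<And>r. (r * y) * (r * y) \<in> jacobson"
  shows "y \<in> jacobson"
proof (rule jacobson_if_one_plus_units)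
  fix r
  have "1 + (- 1) * ((r * y) * (r * y)) \<in> units_of_ring"
    using assms by (rule jacobson_one_plus_unit)
  then show "1 + r * y \<in> units_of_ring"
    by (intro one_plus_unit_if_one_minus_square_unit) simp
qed

lemma tripotent_iff: "x \<in> tripotents \<longleftrightarrow> x * x * x = (x::'a::ring_1)"
  by (simp add: tripotents_def power3_eq_cube)

lemma Delta_subset_jacobson_if_DT_ring:
  assumes DT: "DT_ring TYPE('a::ring_1)"
  shows "Delta \<subseteq> (jacobson :: 'a set)"
proof
  fix d :: 'a
  assume d: "d \<in> Delta"
  show "d \<in> jacobson"
  proof (rule jacobson_if_one_plus_units)
    fix r :: 'a
    obtain t e where t: "t \<in> tripotents" and e: "e \<in> Delta" and r: "r = t + e"
      using DT unfolding DT_ring_def by blast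
    define v where "v = t * t + t - 1"
    define g where "g = 1 - t * t"
    have t3: "t * (t * t) = t" and t4: "t * (t * (t * t)) = t * t"
      using t by (simp_all add: tripotent_iff mult.assoc)
    have "v * v = 1" unfolding v_def using t3 t4 by (simp add: algebra_simps)
    then have "e + v \<in> units_of_ring"
      using e unfolding Delta_def by (blast intro: units_of_ringI)
    then have "(e + v) * d \<in> Delta" using d by (rule Delta_mult_unit_left)
    moreover have "g * g = g" unfolding g_def using t4 by (simp add: algebra_simps)
    then have "g * d \<in> Delta" using d by (rule idempotent_mult_Delta)
    ultimately have "(e + v) * d + g * d \<in> Delta" by (rule Delta_add)
    moreover have "r * d = (e + v) * d + g * d"
      unfolding r v_def g_def by (simp add: algebra_simps)
    ultimately show "1 + r * d \<in> units_of_ring" by (simp add: one_plus_Delta_unit)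
  qed
qed

lemma DT_ring_iff_semi_tripotent: "DT_ring TYPE('a::ring_1) \<longleftrightarrow> semi_tripotent TYPE('a)"
proof
  assume "DT_ring TYPE('a)"
  with Delta_subset_jacobson_if_DT_ring show "semi_tripotent TYPE('a)"
    unfolding DT_ring_def semi_tripotent_def by blast
next
  assume "semi_tripotent TYPE('a)"
  with jacobson_subset_Delta show "DT_ring TYPE('a)"
    unfolding DT_ring_def semi_tripotent_def by blast
qed

lemma semi_tripotent_imp_square_idempotent_mod_jacobson:
  assumes "semi_tripotent TYPE('a::ring_1)"
  shows "\<exists>e j. e * e = e \<and> j \<in> jacobson \<and> (a::'a) ^ 2 = e + j"
proof -
  obtain t j where t: "t \<in> tripotents" and j: "j \<in> jacobson" and a: "a = t + j"
    using assms unfolding semi_tripotent_def by blast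
  have "t * t * (t * t) = t * t" using t by (metis tripotent_iff mult.assoc)
  moreover have "t * j + j * t + j * j \<in> jacobson"
    using j by (intro jacobson_add jacobson_mult_left jacobson_mult_right)
  moreover have "a ^ 2 = t * t + (t * j + j * t + j * j)"
    unfolding a by (simp add: power2_eq_square algebra_simps)
  ultimately show ?thesis by blast
qed

section \<open>The identities \<open>x\<^sup>4 = x\<^sup>2\<close> and \<open>x\<^sup>3 = x\<close>\<close>

text \<open>\<open>a\<close> and \<open>b\<close> behave like the matrix units \<open>e\<^sub>1\<^sub>2\<close> and \<open>e\<^sub>2\<^sub>1\<close>, with \<open>e = e\<^sub>1\<^sub>1\<close>;
  the element \<open>x = e\<^sub>1\<^sub>2 + e\<^sub>2\<^sub>1 + e\<^sub>2\<^sub>2\<close> then has \<open>e x\<^sup>2 e = e\<close> but \<open>e x\<^sup>4 e = 2 e\<close>.\<close>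

lemma matrix_unit_zero_if_pow4_eq_pow2:
  fixes a b e :: "'a::ring_1"
  assumes x4: "\<forall>x::'a. x ^ 4 = x ^ 2"
    and ab: "a * b = e" and ea: "e * a = a" and ae: "a * e = 0"
    and eb: "e * b = 0" and be: "b * e = b"
  shows "e = 0"
proof -
  have ee: "e * e = e" by (metis ab ea mult.assoc)
  have aa: "a * a = 0" by (metis ea ae mult.assoc mult_zero_left)
  have bb: "b * b = 0" by (metis eb be mult.assoc mult_zero_right)
  define x where "x = a + b + b * a"
  have "e * x = a" unfolding x_def using ea eb by (simp add: algebra_simps flip: mult.assoc)
  then have "e * (x * x) = a * a + a * b + (a * b) * a"
    unfolding x_def by (simp add: distrib_left flip: mult.assoc)
  then have exx: "e * (x * x) = e + a" using aa ab ea by simp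
  have "x * e = b" unfolding x_def using ae be by (simp add: algebra_simps mult.assoc)
  then have "x * x * e = a * b + b * b + b * (a * b)"
    unfolding x_def by (simp add: distrib_right mult.assoc)
  then have xxe: "x * x * e = e + b" using bb ab be by simp
  have "x * x * (x * x) = x * x"
    using x4 by (simp add: power4_eq_xxxx power2_eq_square mult.assoc)
  then have "e * (x * x) * e = e * (x * x * (x * x)) * e" by simp
  also have "\<dots> = (e * (x * x)) * (x * x * e)" by (simp only: mult.assoc)
  also have "\<dots> = e * e + e * b + a * e + a * b"
    unfolding exx xxe by (simp add: algebra_simps)
  finally have "e * e + a * e = e * e + e * b + a * e + a * b"
    unfolding exx by (simp only: distrib_right)
  then show "e = 0" using ee ab ae eb by simp
qed

lemma left_multiple_square_zero_if_pow4_eq_pow2: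
  fixes y r :: "'a::ring_1"
  assumes x4: "\<forall>x::'a. x ^ 4 = x ^ 2" and yy: "y * y = 0"
  shows "(r * y) * (r * y) = 0"
proof -
  define e where "e = (r * y) * (r * y)"
  define q where "q = y * r * y"
  have rq: "r * q = e" unfolding e_def q_def by (simp add: mult.assoc)
  have "e * e = (r * y) ^ 4" unfolding e_def by (simp add: power4_eq_xxxx mult.assoc)
  also have "\<dots> = e" using x4 unfolding e_def by (simp add: power2_eq_square)
  finally have ee: "e * e = e" .
  have eq: "e * q = 0"
  proof -
    have "e * q = r * (y * r * (y * y) * r * y)" unfolding e_def q_def by (simp add: mult.assoc)
    then show ?thesis using yy by simp
  qed
  define a where "a = e * r * (1 - e)"
  define b where "b = q * e"
  have "a * b = e * (r * q) * e - e * r * (e * q) * e"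
    unfolding a_def b_def by (simp add: algebra_simps mult.assoc)
  then have "a * b = e" using rq eq ee by simp
  moreover have "e * a = a" unfolding a_def using ee by (simp flip: mult.assoc)
  moreover have "a * e = 0" unfolding a_def using ee by (simp add: algebra_simps mult.assoc)
  moreover have "e * b = 0" unfolding b_def using eq by (simp flip: mult.assoc)
  moreover have "b * e = b" unfolding b_def using ee by (simp add: mult.assoc)
  ultimately have "e = 0" using x4 matrix_unit_zero_if_pow4_eq_pow2 by blast
  then show ?thesis unfolding e_def .
qed

lemma cube_eq_if_pow4_eq_pow2_reduced:
  fixes x :: "'a::ring_1"
  assumes x4: "\<forall>x::'a. x ^ 4 = x ^ 2" and reduced: "\<forall>y::'a. y * y = 0 \<longrightarrow> y = 0"
  shows "x ^ 3 = x"
proof -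
  have x4': "x * (x * (x * x)) = x * x"
    using x4 by (simp add: power4_eq_xxxx power2_eq_square mult.assoc)
  then have "x * (x * (x * (x * x))) = x * (x * x)"
    and "x * (x * (x * (x * (x * x)))) = x * x" by simp_all
  with x4' have "(x * x * x - x) * (x * x * x - x) = 0" by (simp add: algebra_simps)
  with reduced have "x * x * x - x = 0" by blast
  then show ?thesis by (simp add: power3_eq_cube)
qed

lemma tripotent_ring_six_eq_zero:
  assumes cube: "\<forall>x::'a::ring_1. x ^ 3 = x"
  shows "z + z + z + z + z + z = (0::'a)"
proof -
  have "(2::'a) ^ 3 = 2" using cube by blast
  then have "(6::'a) + 2 = 0 + 2" by simp
  then have "(6::'a) = 0" by (rule add_right_imp_eq)
  moreover have "z + z + z + z + z + z = (1 + 1 + 1 + 1 + 1 + 1) * z"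
    by (simp only: distrib_right mult_1_left)
  ultimately show ?thesis by simp
qed

text \<open>Writing \<open>w = A - A\<^sup>2\<close> one finds \<open>w\<^sup>2 = -2w\<close>, hence \<open>(3w)\<^sup>2 = -18w = 0\<close> and so
  \<open>3w = 0\<close>; then \<open>g = -2w\<close> is the required idempotent.\<close>

lemma tripotent_ring_decomposition:
  fixes A :: "'a::ring_1"
  assumes cube: "\<forall>x::'a. x ^ 3 = x"
  obtains g where "g * g = g" and "A * A * g = g" and "g * (A * A) = g" and "A = A * A - 2 * g"
proof -
  have cube': "\<And>x::'a. x * (x * x) = x" using cube by (simp add: power3_eq_cube mult.assoc)
  note six = tripotent_ring_six_eq_zero [OF cube]
  define w where "w = A - A * A"
  have A3: "A * (A * A) = A" by (rule cube')
  then have A4: "A * (A * (A * A)) = A * A" by simp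
  have ww: "w * w = - (w + w)" unfolding w_def using A3 A4 by (simp add: algebra_simps)
  have "(w + w + w) * (w + w + w) = w*w+w*w+w*w+w*w+w*w+w*w+w*w+w*w+w*w"
    by (simp add: algebra_simps)
  also have "\<dots> = - ((w+w+w+w+w+w) + (w+w+w+w+w+w) + (w+w+w+w+w+w))"
    unfolding ww by (simp add: algebra_simps)
  also have "\<dots> = 0" using six by simp
  finally have w3: "w + w + w = 0" by (metis cube' mult_zero_right)
  define g where "g = - (w + w)"
  have "g * g = w*w+w*w+w*w+w*w" unfolding g_def by (simp add: algebra_simps)
  also have "\<dots> = - (w+w+w+w+w+w+w+w)" unfolding ww by (simp add: algebra_simps)
  also have "\<dots> = g" unfolding g_def using six [of w] by (simp add: algebra_simps)
  finally have "g * g = g" .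
  moreover have "A * A * w = w" and "w * (A * A) = w"
    unfolding w_def using A3 A4 by (simp_all add: algebra_simps)
  then have "A * A * g = g" and "g * (A * A) = g"
    unfolding g_def by (simp_all add: algebra_simps)
  moreover have "A = A * A - 2 * g"
    unfolding g_def using w3 unfolding w_def by (simp add: algebra_simps mult_2)
  ultimately show thesis by (rule that)
qed

lemma tripotent_diff_double_idempotent:
  fixes f g :: "'a::ring_1"
  assumes f: "f * f = f" and g: "g * g = g" and fg: "f * g = g" and gf: "g * f = g"
  shows "f - 2 * g \<in> tripotents"
proof -
  have "(f - 2 * g) * (f - 2 * g) = f" using f g fg gf by (simp add: algebra_simps mult_2)
  moreover have "f * (f - 2 * g) = f - 2 * g" using f fg by (simp add: algebra_simps mult_2)
  ultimately show ?thesis by (simp add: tripotent_iff)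
qed

section \<open>The quotient ring \<open>R/J(R)\<close>\<close>

definition jacobson_rel :: "'a::ring_1 \<Rightarrow> 'a \<Rightarrow> bool" where
  "jacobson_rel x y \<longleftrightarrow> x - y \<in> jacobson"

lemma equivp_jacobson_rel: "equivp (jacobson_rel :: 'a::ring_1 \<Rightarrow> 'a \<Rightarrow> bool)"
proof (rule equivpI)
  show "reflp (jacobson_rel :: 'a \<Rightarrow> 'a \<Rightarrow> bool)"
    by (simp add: reflp_def jacobson_rel_def jacobson_zero)
  show "symp (jacobson_rel :: 'a \<Rightarrow> 'a \<Rightarrow> bool)"
    unfolding symp_def jacobson_rel_def by (metis jacobson_uminus minus_diff_eq)
  show "transp (jacobson_rel :: 'a \<Rightarrow> 'a \<Rightarrow> bool)"
    unfolding transp_def jacobson_rel_def by (metis jacobson_add diff_add_cancel add_diff_eq)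
qed

quotient_type (overloaded) 'a jacobson_quot = "'a::ring_1" / jacobson_rel
  by (rule equivp_jacobson_rel)

instantiation jacobson_quot :: (ring_1) ring_1
begin

lift_definition zero_jacobson_quot :: "'a jacobson_quot" is 0 .

lift_definition one_jacobson_quot :: "'a jacobson_quot" is 1 .

lift_definition plus_jacobson_quot :: "'a jacobson_quot \<Rightarrow> 'a jacobson_quot \<Rightarrow> 'a jacobson_quot"
  is "(+)"
proof -
  fix x x' y y' :: 'a
  assume "jacobson_rel x x'" and "jacobson_rel y y'"
  moreover have "(x + y) - (x' + y') = (x - x') + (y - y')" by (simp add: algebra_simps)
  ultimately show "jacobson_rel (x + y) (x' + y')" unfolding jacobson_rel_def by (metis jacobson_add)
qed

lift_definition uminus_jacobson_quot :: "'a jacobson_quot \<Rightarrow> 'a jacobson_quot" is uminus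
proof -
  fix x x' :: 'a
  assume "jacobson_rel x x'"
  moreover have "(- x) - (- x') = - (x - x')" by simp
  ultimately show "jacobson_rel (- x) (- x')" unfolding jacobson_rel_def by (metis jacobson_uminus)
qed

lift_definition minus_jacobson_quot :: "'a jacobson_quot \<Rightarrow> 'a jacobson_quot \<Rightarrow> 'a jacobson_quot"
  is "(-)"
proof -
  fix x x' y y' :: 'a
  assume "jacobson_rel x x'" and "jacobson_rel y y'"
  moreover have "(x - y) - (x' - y') = (x - x') - (y - y')" by (simp add: algebra_simps)
  ultimately show "jacobson_rel (x - y) (x' - y')" unfolding jacobson_rel_def by (metis jacobson_diff)
qed

lift_definition times_jacobson_quot :: "'a jacobson_quot \<Rightarrow> 'a jacobson_quot \<Rightarrow> 'a jacobson_quot"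
  is "(*)"
proof -
  fix x x' y y' :: 'a
  assume "jacobson_rel x x'" and "jacobson_rel y y'"
  then have "x * (y - y') \<in> jacobson" and "(x - x') * y' \<in> jacobson"
    unfolding jacobson_rel_def by (simp_all add: jacobson_mult_left jacobson_mult_right)
  moreover have "x * y - x' * y' = x * (y - y') + (x - x') * y'" by (simp add: algebra_simps)
  ultimately show "jacobson_rel (x * y) (x' * y')" unfolding jacobson_rel_def by (metis jacobson_add)
qed

instance
proof
  fix a b c :: "'a jacobson_quot"
  show "a + b + c = a + (b + c)" by transfer (simp add: jacobson_rel_def jacobson_zero add.assoc)
  show "a + b = b + a" by transfer (simp add: jacobson_rel_def jacobson_zero add.commute)
  show "0 + a = a" by transfer (simp add: jacobson_rel_def jacobson_zero)
  show "- a + a = 0" by transfer (simp add: jacobson_rel_def jacobson_zero)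
  show "a - b = a + - b" by transfer (simp add: jacobson_rel_def jacobson_zero)
  show "a * b * c = a * (b * c)" by transfer (simp add: jacobson_rel_def jacobson_zero mult.assoc)
  show "(a + b) * c = a * c + b * c" by transfer (simp add: jacobson_rel_def jacobson_zero distrib_right)
  show "a * (b + c) = a * b + a * c" by transfer (simp add: jacobson_rel_def jacobson_zero distrib_left)
  show "1 * a = a" by transfer (simp add: jacobson_rel_def jacobson_zero)
  show "a * 1 = a" by transfer (simp add: jacobson_rel_def jacobson_zero)
  show "(0::'a jacobson_quot) \<noteq> 1" by transfer (metis jacobson_rel_def diff_0 jacobson_uminus minus_minus one_notin_jacobson)
qed

end

lift_definition jac_class :: "'a::ring_1 \<Rightarrow> 'a jacobson_quot" is "\<lambda>x. x" .

lemma jac_class_add [simp]: "jac_class (x + y) = jac_class x + jac_class y"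
  by transfer (simp add: jacobson_rel_def jacobson_zero)

lemma jac_class_diff [simp]: "jac_class (x - y) = jac_class x - jac_class y"
  by transfer (simp add: jacobson_rel_def jacobson_zero)

lemma jac_class_mult [simp]: "jac_class (x * y) = jac_class x * jac_class y"
  by transfer (simp add: jacobson_rel_def jacobson_zero)

lemma jac_class_one [simp]: "jac_class 1 = 1"
  by transfer (simp add: jacobson_rel_def jacobson_zero)

lemma jac_class_eq_iff: "jac_class x = jac_class y \<longleftrightarrow> x - y \<in> jacobson"
  by transfer (simp add: jacobson_rel_def)

lemma jac_class_eq_0_iff: "jac_class x = 0 \<longleftrightarrow> x \<in> jacobson"
  by transfer (simp add: jacobson_rel_def)

lemma jac_class_surj: "\<exists>x. X = jac_class x"
  by transfer (metis jacobson_rel_def jacobson_zero diff_self)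

text \<open>Conjugating \<open>h\<close> by the unit \<open>u = 1 - (1 - f) h\<close>, which is \<open>1\<close> modulo \<open>J(R)\<close>,
  turns it into an idempotent with \<open>f (u h u\<^sup>-\<^sup>1) = u h u\<^sup>-\<^sup>1\<close>, since \<open>u h = f h\<close>.\<close>

lemma idempotent_lift_below:
  fixes f h :: "'a::ring_1"
  assumes f: "f * f = f" and h: "h * h = h"
    and fh: "jac_class f * jac_class h = jac_class h" and hf: "jac_class h * jac_class f = jac_class h"
  obtains g where "g * g = g" and "f * g = g" and "g * f = g" and "jac_class g = jac_class h"
proof -
  define u where "u = 1 - (1 - f) * h"
  have "(1 - f) * h \<in> jacobson"
    using fh by (simp add: jac_class_eq_0_iff [symmetric] algebra_simps)
  from jacobson_one_plus_unit [OF this, of "- 1"] have "u \<in> units_of_ring"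
    unfolding u_def by simp
  then obtain v where uv: "u * v = 1" "v * u = 1" by (rule units_of_ringE)
  have "jac_class u = 1" unfolding u_def using fh by (simp add: algebra_simps)
  have "jac_class v = jac_class (v * u)" using \<open>jac_class u = 1\<close> by simp
  then have "jac_class v = 1" using uv by simp
  have uh: "u * h = f * h" unfolding u_def using h by (simp add: algebra_simps mult.assoc)
  then have fuh: "f * (u * h) = u * h" using f by (metis mult.assoc)
  define g where "g = u * h * v * f"
  have "g * g = u * h * v * (f * (u * h)) * v * f" unfolding g_def by (simp add: mult.assoc)
  also have "\<dots> = u * h * (v * u) * h * v * f" unfolding fuh by (simp add: mult.assoc)
  also have "\<dots> = u * (h * h) * v * f" using uv by (simp add: mult.assoc)
  also have "\<dots> = g" unfolding g_def using h by simp
  finally have "g * g = g" .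
  moreover have "f * g = g" unfolding g_def using fuh by (simp flip: mult.assoc)
  moreover have "g * f = g" unfolding g_def using f by (simp add: mult.assoc)
  moreover have "jac_class g = jac_class h"
    unfolding g_def using \<open>jac_class u = 1\<close> \<open>jac_class v = 1\<close> hf by simp
  ultimately show thesis by (rule that)
qed

lemma square_class_idempotent_lift:
  fixes X :: "'a::ring_1 jacobson_quot"
  assumes squares: "\<forall>a::'a. \<exists>e j. e * e = e \<and> j \<in> jacobson \<and> a ^ 2 = e + j"
  obtains e :: 'a where "e * e = e" and "jac_class e = X * X"
proof -
  obtain x where X: "X = jac_class x" using jac_class_surj by blast
  obtain e j where e: "e * e = e" and "j \<in> jacobson" and "x ^ 2 = e + j"
    using squares by blast
  then have "x * x - e \<in> jacobson" by (simp add: power2_eq_square)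
  then have "jac_class (x * x) = jac_class e" by (simp only: jac_class_eq_iff)
  with e show thesis using that unfolding X by simp
qed

lemma jacobson_quot_reduced_if_pow4_eq_pow2:
  fixes Y :: "'a::ring_1 jacobson_quot"
  assumes x4: "\<forall>X::'a jacobson_quot. X ^ 4 = X ^ 2" and "Y * Y = 0"
  shows "Y = 0"
proof -
  obtain y where Y: "Y = jac_class y" using jac_class_surj by blast
  have "(r * y) * (r * y) \<in> jacobson" for r
  proof -
    have "(jac_class r * Y) * (jac_class r * Y) = 0"
      using x4 assms(2) by (rule left_multiple_square_zero_if_pow4_eq_pow2)
    then have "jac_class ((r * y) * (r * y)) = 0" unfolding Y by simp
    then show ?thesis by (simp only: jac_class_eq_0_iff)
  qed
  then have "y \<in> jacobson" by (rule jacobson_if_left_multiples_squares_jacobson)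
  then show "Y = 0" unfolding Y by (simp only: jac_class_eq_0_iff)
qed

lemma tripotent_class_lift:
  fixes a :: "'a::ring_1"
  assumes squares: "\<forall>a::'a. \<exists>e j. e * e = e \<and> j \<in> jacobson \<and> a ^ 2 = e + j"
    and cube: "\<forall>X::'a jacobson_quot. X ^ 3 = X"
  obtains t :: 'a where "t \<in> tripotents" and "jac_class t = jac_class a"
proof -
  let ?A = "jac_class a"
  obtain G where G: "G * G = G" "?A * ?A * G = G" "G * (?A * ?A) = G" "?A = ?A * ?A - 2 * G"
    using cube by (rule tripotent_ring_decomposition)
  obtain f where f: "f * f = f" "jac_class f = ?A * ?A"
    using squares by (rule square_class_idempotent_lift)
  obtain h where h: "h * h = h" "jac_class h = G"
    using squares G(1) by (metis square_class_idempotent_lift)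
  obtain g where g: "g * g = g" "f * g = g" "g * f = g" "jac_class g = G"
    using f(1) h(1) by (rule idempotent_lift_below) (simp_all add: f(2) h(2) G(2,3))
  have "f - 2 * g \<in> tripotents" using f(1) g(1-3) by (rule tripotent_diff_double_idempotent)
  moreover have "jac_class (f - 2 * g) = ?A" using f(2) g(4) G(4) by (simp add: mult_2)
  ultimately show thesis by (rule that)
qed

lemma square_idempotent_mod_jacobson_imp_semi_tripotent:
  assumes squares: "\<forall>a::'a::ring_1. \<exists>e j. e * e = e \<and> j \<in> jacobson \<and> a ^ 2 = e + j"
  shows "semi_tripotent TYPE('a)"
proof -
  have x4: "\<forall>X::'a jacobson_quot. X ^ 4 = X ^ 2"
  proof
    fix X :: "'a jacobson_quot"
    obtain e where "e * e = e" and "jac_class e = X * X"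
      using squares by (rule square_class_idempotent_lift)
    then have "(X * X) * (X * X) = X * X" by (metis jac_class_mult)
    then show "X ^ 4 = X ^ 2" by (simp add: power4_eq_xxxx power2_eq_square mult.assoc)
  qed
  moreover have "\<forall>Y::'a jacobson_quot. Y * Y = 0 \<longrightarrow> Y = 0"
    using x4 jacobson_quot_reduced_if_pow4_eq_pow2 by blast
  ultimately have "\<forall>X::'a jacobson_quot. X ^ 3 = X" by (blast intro: cube_eq_if_pow4_eq_pow2_reduced)
  then have "\<exists>t. t \<in> tripotents \<and> a - t \<in> jacobson" for a :: 'a
    using squares by (metis tripotent_class_lift jac_class_eq_iff)
  then show ?thesis unfolding semi_tripotent_def by (metis add.commute diff_add_cancel)
qed

theorem theorem4p11:
  shows "(DT_ring TYPE('a::ring_1) \<longleftrightarrow> semi_tripotent TYPE('a))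
       \<and> (semi_tripotent TYPE('a) \<longleftrightarrow>
           (\<forall>a::'a. \<exists>e j. e * e = e \<and> j \<in> jacobson \<and> a ^ 2 = e + j))"
  using DT_ring_iff_semi_tripotent semi_tripotent_imp_square_idempotent_mod_jacobson
    square_idempotent_mod_jacobson_imp_semi_tripotent by blast

end
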